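(* Let $G$ be a graph with $\mathrm{diam}(G)=3$ such that $D_2(G)$ is connected. Then $\mathrm{diam}(D_2(G))\leqslant 5$.
   Context: All graphs are finite, simple and undirected. For a graph $G$, $\mathrm{d}_G(x,y)$ denotes the length of a shortest path between $x$ and $y$, and $\mathrm{diam}(G)$ is the maximum distance between vertices of $G$. The $2$-distance graph $D_2(G)$ of $G$ is the graph with vertex set $V(G)$ in which two vertices $x,y$ are adjacent if and only if $\mathrm{d}_G(x,y)=2$. *)

theory Defs
  imports Main "HOL-Library.Extended_Nat"
begin

definition simple_graph :: "'a set \<Rightarrow> ('a \<Rightarrow> 'a \<Rightarrow> bool) \<Rightarrow> bool" where
  "simple_graph V E \<longleftrightarrow> finite V \<and> (\<forall>x y. E x y \<longrightarrow> x \<in> V \<and> y \<in> V)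
     \<and> (\<forall>x y. E x y \<longrightarrow> E y x) \<and> (\<forall>x. \<not> E x x)"

fun walk :: "('a \<Rightarrow> 'a \<Rightarrow> bool) \<Rightarrow> 'a list \<Rightarrow> bool" where
  "walk E [] = False"
| "walk E [x] = True"
| "walk E (x # y # xs) = (E x y \<and> walk E (y # xs))"

definition gdist :: "('a \<Rightarrow> 'a \<Rightarrow> bool) \<Rightarrow> 'a \<Rightarrow> 'a \<Rightarrow> enat" where
  "gdist E x y = (if \<exists>p. walk E p \<and> hd p = x \<and> last p = y
     then enat (LEAST n. \<exists>p. walk E p \<and> hd p = x \<and> last p = y \<and> length p = Suc n)
     else \<infinity>)"

definition diam :: "'a set \<Rightarrow> ('a \<Rightarrow> 'a \<Rightarrow> bool) \<Rightarrow> enat" where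
  "diam V E = Sup {gdist E x y | x y. x \<in> V \<and> y \<in> V}"

definition gconnected :: "'a set \<Rightarrow> ('a \<Rightarrow> 'a \<Rightarrow> bool) \<Rightarrow> bool" where
  "gconnected V E \<longleftrightarrow> (\<forall>x\<in>V. \<forall>y\<in>V. gdist E x y \<noteq> \<infinity>)"

definition D2 :: "'a set \<Rightarrow> ('a \<Rightarrow> 'a \<Rightarrow> bool) \<Rightarrow> 'a \<Rightarrow> 'a \<Rightarrow> bool" where
  "D2 V E x y \<longleftrightarrow> x \<in> V \<and> y \<in> V \<and> gdist E x y = 2"

end

theory Submission
  imports Defs
begin

text \<open>
  Write \<open>d\<close> for the distance in \<open>G\<close> and \<open>d\<^sub>2\<close> for the distance in \<open>D\<^sub>2(G)\<close>.
  Vertices at distance 0 or 2 in \<open>G\<close> are at \<open>d\<^sub>2\<close>-distance at most 1, so only the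
  distances 1 and 3 need work.

  If \<open>d(x,y) = 3\<close> but \<open>d\<^sub>2(x,y) > 4\<close>, short \<open>D\<^sub>2\<close>-walks are excluded, and a case
  analysis along geodesics shows that no vertex is at distance 3 from both \<open>x\<close> and
  \<open>y\<close>. Hence every vertex lies on the side of \<open>x\<close> (\<open>d(x,z) \<in> {0,2}\<close>, or
  \<open>d(x,z) = 1\<close> and \<open>d(y,z) = 3\<close>) or on the side of \<open>y\<close>, and a \<open>D\<^sub>2\<close>-edge leaving
  the side of \<open>x\<close>, which exists as \<open>D\<^sub>2(G)\<close> is connected, would give a
  \<open>D\<^sub>2\<close>-walk of length at most 4 from \<open>x\<close> to \<open>y\<close>.

  If \<open>d(u,v) = 1\<close>, a vertex at distance 2 from one of \<open>u, v\<close> and at least 2 from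
  the other gives \<open>d\<^sub>2(u,v) \<le> 1 + 4\<close>. Otherwise every vertex is within \<open>d\<^sub>2\<close>-distance
  2 of \<open>u\<close> or of \<open>v\<close>: a common neighbour of \<open>u\<close> and \<open>v\<close> violating this would be
  adjacent to all vertices at distance 2 from \<open>u\<close> or \<open>v\<close>, forcing \<open>diam(G) \<le> 2\<close>.
  Connectivity of \<open>D\<^sub>2(G)\<close> then yields a walk of length at most \<open>2 + 1 + 2\<close>.
\<close>

lemma walk_not_Nil: "walk R p \<Longrightarrow> p \<noteq> []"
  by (cases p) auto

lemma walk_append:
  "walk R p \<Longrightarrow> walk R q \<Longrightarrow> last p = hd q \<Longrightarrow> walk R (p @ tl q)"
proof (induction R p rule: walk.induct)
  case (2 R x)
  then show ?case by (cases q) auto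
qed simp_all

lemma walk_rev: "symp R \<Longrightarrow> walk R p \<Longrightarrow> walk R (rev p)"
proof (induction R p rule: walk.induct)
  case (3 R x y xs)
  then have "walk R (rev (y # xs) @ tl [y, x])"
    by (intro walk_append) (auto dest: sympD)
  then show ?case by simp
qed simp_all

lemma walk_exit:
  "walk R p \<Longrightarrow> P (hd p) \<Longrightarrow> \<not> P (last p) \<Longrightarrow> \<exists>s t. R s t \<and> P s \<and> \<not> P t"
proof (induction R p rule: walk.induct)
  case (3 R x y xs)
  then show ?case by (cases "P y") auto
qed simp_all

lemma gdist_le_walk: "walk R p \<Longrightarrow> gdist R (hd p) (last p) \<le> of_nat (length p - 1)"
proof -
  assume p: "walk R p"
  then have "(LEAST n. \<exists>q. walk R q \<and> hd q = hd p \<and> last q = last p \<and> length q = Suc n)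
      \<le> length p - 1"
    by (intro Least_le exI[of _ p]) (auto dest: walk_not_Nil)
  then show ?thesis using p unfolding gdist_def by (auto simp: of_nat_eq_enat)
qed

lemma gdist_enatE:
  assumes "gdist R x y = enat n"
  obtains p where "walk R p" "hd p = x" "last p = y" "length p = Suc n"
proof -
  let ?P = "\<lambda>m. \<exists>p. walk R p \<and> hd p = x \<and> last p = y \<and> length p = Suc m"
  obtain q where q: "walk R q" "hd q = x" "last q = y"
    using assms unfolding gdist_def by (auto split: if_splits)
  moreover have "length q = Suc (length q - 1)"
    using walk_not_Nil[OF q(1)] by simp
  ultimately have "?P (length q - 1)" by blast
  then have "?P (Least ?P)" by (rule LeastI)
  moreover have "\<exists>p. walk R p \<and> hd p = x \<and> last p = y" using q by blast
  then have "Least ?P = n"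
    using assms unfolding gdist_def by simp
  ultimately show ?thesis using that by blast
qed

lemma gdist_self: "gdist R x x = 0"
  using gdist_le_walk[of R "[x]"] by simp

lemma gdist_le_one: "R x y \<Longrightarrow> gdist R x y \<le> 1"
  using gdist_le_walk[of R "[x, y]"] by simp

lemma gdist_triangle: "gdist R x z \<le> gdist R x y + gdist R y z"
proof (cases "gdist R x y = \<infinity> \<or> gdist R y z = \<infinity>")
  case False
  then obtain m n where m: "gdist R x y = enat m" and n: "gdist R y z = enat n"
    by auto
  obtain p where p: "walk R p" "hd p = x" "last p = y" "length p = Suc m"
    using gdist_enatE[OF m] .
  obtain q where q: "walk R q" "hd q = y" "last q = z" "length q = Suc n"
    using gdist_enatE[OF n] .
  have "last (p @ tl q) = z"
    using p q by (cases q) (auto simp: last_append)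
  then have "gdist R x z \<le> of_nat (length (p @ tl q) - 1)"
    using gdist_le_walk[OF walk_append[OF p(1) q(1)]] p q walk_not_Nil by fastforce
  then show ?thesis using m n p q by (simp add: of_nat_eq_enat)
qed auto

lemma gdist_le_add: "gdist R x y \<le> a \<Longrightarrow> gdist R y z \<le> b \<Longrightarrow> gdist R x z \<le> a + b"
  using gdist_triangle[of R x z y] add_mono order_trans by blast

lemma gdist_commute: "symp R \<Longrightarrow> gdist R x y = gdist R y x"
proof -
  assume "symp R"
  have "gdist R y x \<le> gdist R x y" for x y
  proof (cases "gdist R x y")
    case (enat n)
    then obtain p where "walk R p" "hd p = x" "last p = y" "length p = Suc n"
      by (rule gdist_enatE)
    then show ?thesis
      using gdist_le_walk[OF walk_rev[OF \<open>symp R\<close>]] enat walk_not_Nil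
      by (fastforce simp: hd_rev last_rev of_nat_eq_enat)
  qed simp
  then show ?thesis by (metis order_antisym)
qed

lemma gconnected_exit:
  assumes "gconnected V R" "x \<in> V" "y \<in> V" "P x" "\<not> P y"
  shows "\<exists>s t. R s t \<and> P s \<and> \<not> P t"
proof -
  obtain n where "gdist R x y = enat n"
    using assms(1-3) unfolding gconnected_def by auto
  then obtain p where "walk R p" "hd p = x" "last p = y"
    by (rule gdist_enatE)
  then show ?thesis using walk_exit assms(4,5) by blast
qed

lemma gconnected_gdist_le_if_balls_cover:
  assumes "gconnected V R" and R_in_V: "\<And>s t. R s t \<Longrightarrow> t \<in> V" and "u \<in> V" "v \<in> V"
    and cover: "\<And>z. z \<in> V \<Longrightarrow> gdist R u z \<le> a \<or> gdist R z v \<le> b"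
  shows "gdist R u v \<le> a + 1 + b"
proof (cases "gdist R u v \<le> a")
  case True
  then show ?thesis by (simp add: add.assoc add_increasing2)
next
  case False
  moreover have "gdist R u u \<le> a" by (simp add: gdist_self)
  ultimately obtain s t where st: "R s t" "gdist R u s \<le> a" "\<not> gdist R u t \<le> a"
    using gconnected_exit[OF assms(1,3,4), of "\<lambda>z. gdist R u z \<le> a"] by blast
  then have "gdist R t v \<le> b" using cover R_in_V by blast
  with gdist_le_add[OF st(2) gdist_le_one[of R, OF st(1)]] show ?thesis by (rule gdist_le_add)
qed

locale diam3_graph =
  fixes V :: "'a set" and E :: "'a \<Rightarrow> 'a \<Rightarrow> bool"
  assumes simple: "simple_graph V E" and diam3: "diam V E = 3"
begin

definition d :: "'a \<Rightarrow> 'a \<Rightarrow> nat" where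
  "d x y = the_enat (gdist E x y)"

abbreviation d\<^sub>2 :: "'a \<Rightarrow> 'a \<Rightarrow> enat" where
  "d\<^sub>2 x y \<equiv> gdist (D2 V E) x y"

lemma symp_E: "symp E"
  using simple unfolding simple_graph_def symp_def by blast

lemma E_in_V: "E x y \<Longrightarrow> x \<in> V \<and> y \<in> V"
  using simple unfolding simple_graph_def by blast

lemma gdist_le_diam: "x \<in> V \<Longrightarrow> y \<in> V \<Longrightarrow> gdist E x y \<le> 3"
  using diam3 unfolding diam_def by (metis (mono_tags, lifting) Sup_upper mem_Collect_eq)

lemma gdist_eq_d: "x \<in> V \<Longrightarrow> y \<in> V \<Longrightarrow> gdist E x y = enat (d x y)"
  using gdist_le_diam[of x y] unfolding d_def by (cases "gdist E x y") auto

lemma d_le_3: "x \<in> V \<Longrightarrow> y \<in> V \<Longrightarrow> d x y \<le> 3"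
  using gdist_le_diam[of x y] gdist_eq_d[of x y] by (simp add: numeral_eq_enat)

lemma d_commute: "d x y = d y x"
  unfolding d_def using gdist_commute[OF symp_E] by metis

lemma d_triangle: "x \<in> V \<Longrightarrow> y \<in> V \<Longrightarrow> z \<in> V \<Longrightarrow> d x z \<le> d x y + d y z"
  using gdist_triangle[of E x z y] gdist_eq_d[of x z] gdist_eq_d[of x y] gdist_eq_d[of y z]
  by simp

lemma d_eq_0_iff: "x \<in> V \<Longrightarrow> y \<in> V \<Longrightarrow> d x y = 0 \<longleftrightarrow> x = y"
proof
  assume "x \<in> V" "y \<in> V" "d x y = 0"
  then obtain p where "walk E p" "hd p = x" "last p = y" "length p = Suc 0"
    using gdist_eq_d gdist_enatE by metis
  then show "x = y" by (cases p) auto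
qed (simp add: d_def gdist_self zero_enat_def)

lemma d_geodesic_step:
  assumes "x \<in> V" "y \<in> V" "d x y = Suc n"
  obtains z where "z \<in> V" "d x z = 1" "d z y = n"
proof -
  obtain p where p: "walk E p" "hd p = x" "last p = y" "length p = Suc (Suc n)"
    using assms gdist_eq_d gdist_enatE by metis
  then obtain z r where pz: "p = x # z # r"
    by (cases p; cases "tl p") auto
  then have "E x z" "walk E (z # r)" using p by auto
  then have zV: "z \<in> V" and "gdist E x z \<le> 1" "gdist E z y \<le> enat n"
    using E_in_V gdist_le_one gdist_le_walk[of E "z # r"] p pz by (auto simp: of_nat_eq_enat)
  then have "d x z \<le> 1" "d z y \<le> n"
    using assms(1,2) gdist_eq_d by (auto simp: one_enat_def)
  moreover have "d x y \<le> d x z + d z y" using d_triangle assms zV by blast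
  ultimately show ?thesis using that zV assms(3) by simp
qed

lemma d_eq_3_geodesic:
  assumes xV: "x \<in> V" and vV: "v \<in> V" and "d x v = 3"
  obtains a m where "a \<in> V" "m \<in> V" "d x a = 1" "d a m = 1" "d m v = 1" "d a v = 2" "d x m = 2"
proof -
  obtain a where aV: "a \<in> V" and xa: "d x a = 1" and av: "d a v = 2"
    using d_geodesic_step[OF xV vV] assms(3) by (metis numeral_3_eq_3 numeral_2_eq_2)
  obtain m where mV: "m \<in> V" and am: "d a m = 1" and mv: "d m v = 1"
    using d_geodesic_step[OF aV vV] av by (metis numeral_2_eq_2 One_nat_def)
  have "d x m = 2"
    using d_triangle[OF xV aV mV] d_triangle[OF xV mV vV] xa am mv assms(3) by linarith
  then show ?thesis using that aV mV xa am mv av by blast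
qed

lemma exists_d_eq_3: "\<exists>s\<in>V. \<exists>t\<in>V. d s t = 3"
proof (rule ccontr)
  assume "\<not> ?thesis"
  then have "gdist E s t \<le> 2" if "s \<in> V" "t \<in> V" for s t
    using that d_le_3[OF that] gdist_eq_d[OF that] by (fastforce simp: numeral_eq_enat)
  then have "diam V E \<le> 2" unfolding diam_def by (blast intro: Sup_least)
  then show False using diam3 by simp
qed

lemma d_le_2_if_dominating_pair:
  assumes "u \<in> V" "v \<in> V" "z \<in> V" "s \<in> V" "t \<in> V"
    and dominating: "\<And>w. w \<in> V \<Longrightarrow> d u w \<le> 1 \<or> d v w \<le> 1"
    and centre: "\<And>w. w \<in> V \<Longrightarrow> 2 \<le> d u w \<or> 2 \<le> d v w \<Longrightarrow> d z w \<le> 1"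
  shows "d s t \<le> 2"
  using d_triangle[of s u t] d_triangle[of s v t] d_triangle[of s z t]
    dominating[of s] dominating[of t] centre[of s] centre[of t] assms(1-5)
    d_commute[of s u] d_commute[of s v] d_commute[of s z]
  by fastforce

lemma D2_iff: "D2 V E x y \<longleftrightarrow> x \<in> V \<and> y \<in> V \<and> d x y = 2"
  unfolding D2_def using gdist_eq_d by (auto simp: numeral_eq_enat)

lemma symp_D2: "symp (D2 V E)"
  unfolding symp_def D2_iff using d_commute by metis

lemma d2_commute: "d\<^sub>2 x y = d\<^sub>2 y x"
  using gdist_commute[OF symp_D2] .

lemma d2_le_1: "x \<in> V \<Longrightarrow> y \<in> V \<Longrightarrow> d x y \<in> {0, 2} \<Longrightarrow> d\<^sub>2 x y \<le> 1"
  using d_eq_0_iff[of x y] gdist_le_one[of "D2 V E" x y] D2_iff by (auto simp: gdist_self)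

lemma d2_le_2_if_neighbour_far:
  assumes xV: "x \<in> V" and yV: "y \<in> V" and wV: "w \<in> V"
    and xy: "d x y = 3" and far: "2 < d\<^sub>2 x y" and xw: "d x w = 1" and yw: "d y w = 3"
  shows "d\<^sub>2 x w \<le> 2"
proof -
  obtain b where bV: "b \<in> V" and yb: "d y b = 1" and bw: "d b w = 2"
    using d_geodesic_step[OF yV wV] yw by (metis numeral_3_eq_3 numeral_2_eq_2)
  obtain q where qV: "q \<in> V" and bq: "d b q = 1" and qw: "d q w = 1"
    using d_geodesic_step[OF bV wV] bw by (metis numeral_2_eq_2 One_nat_def)
  have yq: "d y q = 2"
    using d_triangle[OF yV bV qV] d_triangle[OF yV qV wV] yb bq qw yw by linarith
  have "d x q \<noteq> 2"
    using gdist_le_walk[of "D2 V E" "[x, q, y]"] far yq xV yV qV by (auto simp: D2_iff d_commute)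
  moreover have "x \<noteq> q" using xy yq d_commute[of x y] by auto
  ultimately have xq: "d x q = 1"
    using d_triangle[OF xV wV qV] xw qw d_commute[of w q] d_eq_0_iff[OF xV qV] by linarith
  have "d x b = 2"
    using d_triangle[OF xV qV bV] d_triangle[OF xV bV yV] xq bq xy yb
      d_commute[of q b] d_commute[of b y] by linarith
  then show ?thesis
    using gdist_le_walk[of "D2 V E" "[x, b, w]"] xV bV wV bw by (simp add: D2_iff d_commute)
qed

context
  fixes x y
  assumes xV: "x \<in> V" and yV: "y \<in> V" and xy: "d x y = 3" and far: "4 < d\<^sub>2 x y"
begin

lemma far_pair_no_short_walk: "length ps \<le> 3 \<Longrightarrow> \<not> walk (D2 V E) (x # ps @ [y])"
proof
  assume "length ps \<le> 3" "walk (D2 V E) (x # ps @ [y])"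
  then have "d\<^sub>2 x y \<le> of_nat (Suc (length ps))"
    using gdist_le_walk by fastforce
  also have "\<dots> \<le> 4" using \<open>length ps \<le> 3\<close> by (simp add: of_nat_eq_enat numeral_eq_enat)
  finally show False using far by simp
qed

lemma far_pair_d2_gt_2: "2 < d\<^sub>2 x y" "2 < d\<^sub>2 y x"
  using far d2_commute[of x y] order.strict_trans1[of "2::enat" 4] by auto

lemma far_pair_geodesic_ends_adjacent:
  assumes vV: "v \<in> V" and mV: "m \<in> V" and m'V: "m' \<in> V"
    and xv: "d x v = 3" and yv: "d y v = 3"
    and xm: "d x m = 2" and mv: "d m v = 1" and ym': "d y m' = 2" and m'v: "d m' v = 1"
  shows "d y m = 3" "d x m' = 3" "d m m' = 1"
proof -
  have "d y m \<noteq> 2"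
    using far_pair_no_short_walk[of "[m]"] xV yV mV xm by (auto simp: D2_iff d_commute)
  then show ym: "d y m = 3"
    using d_triangle[OF yV mV vV] d_le_3[OF yV mV] yv mv by linarith
  have "d x m' \<noteq> 2"
    using far_pair_no_short_walk[of "[m']"] xV yV m'V ym' by (auto simp: D2_iff d_commute)
  then show xm': "d x m' = 3"
    using d_triangle[OF xV m'V vV] d_le_3[OF xV m'V] xv m'v by linarith
  have "d m m' \<noteq> 2"
    using far_pair_no_short_walk[of "[m, m']"] xV yV mV m'V xm ym'
    by (auto simp: D2_iff d_commute)
  moreover have "m \<noteq> m'" using xm xm' by auto
  ultimately show "d m m' = 1"
    using d_triangle[OF mV vV m'V] mv m'v d_commute[of v m'] d_eq_0_iff[OF mV m'V] by linarith
qed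

lemma far_pair_no_common_distance_3: "v \<in> V \<Longrightarrow> \<not> (d x v = 3 \<and> d y v = 3)"
proof
  assume vV: "v \<in> V" and "d x v = 3 \<and> d y v = 3"
  then have xv: "d x v = 3" and yv: "d y v = 3" by auto
  obtain a m where aV: "a \<in> V" and mV: "m \<in> V" and xa: "d x a = 1" and am: "d a m = 1"
    and mv: "d m v = 1" and av: "d a v = 2" and xm: "d x m = 2"
    using d_eq_3_geodesic[OF xV vV xv] .
  obtain b m' where bV: "b \<in> V" and m'V: "m' \<in> V" and yb: "d y b = 1" and bm': "d b m' = 1"
    and m'v: "d m' v = 1" and bv: "d b v = 2" and ym': "d y m' = 2"
    using d_eq_3_geodesic[OF yV vV yv] .
  note ends = far_pair_geodesic_ends_adjacent[OF vV mV m'V xv yv xm mv ym' m'v]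
  have am': "d a m' = 2"
    using d_triangle[OF aV mV m'V] d_triangle[OF xV aV m'V] am ends xa by linarith
  have bm: "d b m = 2"
    using d_triangle[OF bV m'V mV] d_triangle[OF yV bV mV] bm' ends yb d_commute[of m' m]
    by linarith
  consider "d y a = 3" | "d x b = 3" | "d y a = 2" "d x b = 2"
    using d_triangle[OF xV aV yV] d_triangle[OF yV bV xV] d_le_3[OF yV aV] d_le_3[OF xV bV]
      xa yb xy d_commute[of a y] d_commute[of b x] d_commute[of x y] by linarith
  then show False
  proof cases
    case 1
    have "d\<^sub>2 x a \<le> 2" using d2_le_2_if_neighbour_far[OF xV yV aV xy far_pair_d2_gt_2(1) xa 1] .
    moreover have "d\<^sub>2 a y \<le> 2"
      using gdist_le_walk[of "D2 V E" "[a, m', y]"] aV m'V yV am' ym'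
      by (simp add: D2_iff d_commute)
    ultimately show False using gdist_le_add far by fastforce
  next
    case 2
    have "d\<^sub>2 y b \<le> 2"
      using d2_le_2_if_neighbour_far[OF yV xV bV _ far_pair_d2_gt_2(2) yb 2] xy d_commute[of x y]
      by simp
    moreover have "d\<^sub>2 x b \<le> 2"
      using gdist_le_walk[of "D2 V E" "[x, m, b]"] xV mV bV xm bm by (simp add: D2_iff d_commute)
    ultimately show False using gdist_le_add d2_commute far by fastforce
  next
    case 3
    then show False
      using far_pair_no_short_walk[of "[b, v, a]"] xV yV aV bV vV av bv
      by (auto simp: D2_iff d_commute)
  qed
qed

lemma far_pair_sides:
  "z \<in> V \<Longrightarrow> d x z \<in> {0, 2} \<or> d x z = 1 \<and> d y z = 3 \<or> d y z \<in> {0, 2} \<or> d y z = 1 \<and> d x z = 3"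
  using far_pair_no_common_distance_3[of z] d_triangle[OF xV _ yV, of z]
    d_le_3[OF xV, of z] d_le_3[OF yV, of z] xy d_commute[of z y]
  by auto

lemma far_pair_sides_not_D2_adjacent:
  assumes sV: "s \<in> V" and tV: "t \<in> V"
    and xs: "d x s = 1" and ys: "d y s = 3" and yt: "d y t = 1" and xt: "d x t = 3"
  shows "d s t \<noteq> 2"
proof
  assume "d s t = 2"
  then obtain m where mV: "m \<in> V" and sm: "d s m = 1" and mt: "d m t = 1"
    using d_geodesic_step[OF sV tV] by (metis numeral_2_eq_2 One_nat_def)
  have "d x m = 2"
    using d_triangle[OF xV sV mV] d_triangle[OF xV mV tV] xs sm mt xt by linarith
  moreover have "d y m = 2"
    using d_triangle[OF yV tV mV] d_triangle[OF yV mV sV] yt ys sm mt d_commute[of t m]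
      d_commute[of m s] by linarith
  ultimately show False
    using far_pair_no_short_walk[of "[m]"] xV yV mV by (auto simp: D2_iff d_commute)
qed

end

lemma eccentricity_le_2:
  assumes uV: "u \<in> V" and vV: "v \<in> V" and wV: "w \<in> V" and uv: "d u v = 1"
    and u2: "\<And>w. w \<in> V \<Longrightarrow> d u w = 2 \<Longrightarrow> d v w \<le> 1"
    and v2: "\<And>w. w \<in> V \<Longrightarrow> d v w = 2 \<Longrightarrow> d u w \<le> 1"
  shows "d u w \<le> 2"
proof (rule ccontr)
  assume "\<not> d u w \<le> 2"
  then have uw: "d u w = 3" using d_le_3[OF uV wV] by simp
  then obtain q where qV: "q \<in> V" and wq: "d w q = 1" and qu: "d q u = 2"
    using d_geodesic_step[OF wV uV] d_commute[of u w] by (metis numeral_3_eq_3 numeral_2_eq_2)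
  have "d v q \<le> 1" using u2[OF qV] qu d_commute by metis
  then have "d v w = 2"
    using d_triangle[OF vV qV wV] d_triangle[OF uV vV wV] wq uw uv d_commute[of w q] by linarith
  then show False using v2[OF wV] uw by simp
qed

lemma common_neighbour_d2_le_2:
  assumes uV: "u \<in> V" and vV: "v \<in> V" and zV: "z \<in> V"
    and dominating: "\<And>w. w \<in> V \<Longrightarrow> d u w \<le> 1 \<or> d v w \<le> 1"
    and ecc: "\<And>w. w \<in> V \<Longrightarrow> d u w \<le> 2 \<and> d v w \<le> 2"
    and uz: "d u z = 1" and vz: "d v z = 1"
  shows "d\<^sub>2 u z \<le> 2 \<or> d\<^sub>2 v z \<le> 2"
proof (rule ccontr)
  assume far: "\<not> ?thesis"
  have adjacent: "d z w \<le> 1"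
    if "a \<in> V" "b \<in> V" "w \<in> V" "\<not> d\<^sub>2 a z \<le> 2" "d a z = 1" "d b z = 1" "d a w = 2" "d b w \<le> 1"
    for a b w
  proof -
    have "d z w \<noteq> 2"
      using that zV gdist_le_walk[of "D2 V E" "[a, w, z]"] by (auto simp: D2_iff d_commute)
    moreover have "z \<noteq> w" using that by auto
    ultimately show ?thesis
      using that d_triangle[of z b w] d_commute[of z b] d_eq_0_iff[of z w] zV by fastforce
  qed
  have "d z w \<le> 1" if wV: "w \<in> V" and "2 \<le> d u w \<or> 2 \<le> d v w" for w
    using that(2)
  proof
    assume "2 \<le> d u w"
    then have "d u w = 2" "d v w \<le> 1" using ecc[OF wV] dominating[OF wV] by auto
    then show ?thesis using adjacent[OF uV vV wV _ uz vz] far by blast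
  next
    assume "2 \<le> d v w"
    then have "d v w = 2" "d u w \<le> 1" using ecc[OF wV] dominating[OF wV] by auto
    then show ?thesis using adjacent[OF vV uV wV _ vz uz] far by blast
  qed
  then have "d s t \<le> 2" if "s \<in> V" "t \<in> V" for s t
    using d_le_2_if_dominating_pair[OF uV vV zV that dominating] by blast
  then show False using exists_d_eq_3 by fastforce
qed

end

locale diam3_graph_D2_connected = diam3_graph +
  assumes D2_connected: "gconnected V (D2 V E)"
begin

lemma d2_le_4_if_d_eq_3:
  assumes xV: "x \<in> V" and yV: "y \<in> V" and xy: "d x y = 3"
  shows "d\<^sub>2 x y \<le> 4"
proof (rule ccontr)
  assume "\<not> ?thesis"
  then have far: "4 < d\<^sub>2 x y" by simp
  note far_pair = xV yV xy far
  note far2 = far_pair_d2_gt_2[OF far_pair]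
  have yx: "d y x = 3" using xy d_commute by metis
  define near_x where "near_x z \<longleftrightarrow> d x z \<in> {0, 2} \<or> d x z = 1 \<and> d y z = 3" for z
  obtain s t where "D2 V E s t" "near_x s" "\<not> near_x t"
    using gconnected_exit[OF D2_connected xV yV, of near_x] xy d_eq_0_iff[OF xV xV]
    by (auto simp: near_x_def)
  then have sV: "s \<in> V" and tV: "t \<in> V" and st: "d s t = 2"
    and s: "d x s \<in> {0, 2} \<or> d x s = 1 \<and> d y s = 3"
    and t: "d y t \<in> {0, 2} \<or> d y t = 1 \<and> d x t = 3"
    using far_pair_sides[OF far_pair, of t] by (auto simp: D2_iff near_x_def)
  have xs: "d\<^sub>2 x s \<le> 2"
    using s d2_le_1[OF xV sV] d2_le_2_if_neighbour_far[OF xV yV sV xy far2(1)]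
    by (auto intro: order_trans)
  have ty: "d\<^sub>2 t y \<le> 2"
    using t d2_le_1[OF yV tV] d2_le_2_if_neighbour_far[OF yV xV tV yx far2(2)]
      d2_commute[of t y]
    by (auto intro: order_trans)
  have st1: "d\<^sub>2 s t \<le> 1" using d2_le_1[OF sV tV] st by simp
  have "d x s \<in> {0, 2} \<or> d y t \<in> {0, 2}"
    using s t st far_pair_sides_not_D2_adjacent[OF far_pair sV tV] by auto
  then consider "d\<^sub>2 x s \<le> 1" | "d\<^sub>2 t y \<le> 1"
    using d2_le_1[OF xV sV] d2_le_1[OF yV tV] d2_commute[of t y] by auto
  then have "d\<^sub>2 x y \<le> 4"
  proof cases
    case 1
    then show ?thesis using gdist_le_add[OF gdist_le_add[OF 1 st1] ty] by simp
  next
    case 2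
    then show ?thesis using gdist_le_add[OF gdist_le_add[OF xs st1] 2] by simp
  qed
  then show False using far by simp
qed

lemma d2_le_4_if_2_le_d:
  assumes xV: "x \<in> V" and yV: "y \<in> V" and "2 \<le> d x y"
  shows "d\<^sub>2 x y \<le> 4"
proof -
  have "d x y = 2 \<or> d x y = 3" using assms d_le_3[OF xV yV] by auto
  then show ?thesis
    using d2_le_1[OF xV yV] d2_le_4_if_d_eq_3[OF xV yV] order_trans[of _ 1 4] by fastforce
qed

lemma d2_le_5_if_adjacent:
  assumes uV: "u \<in> V" and vV: "v \<in> V" and uv: "d u v = 1"
  shows "d\<^sub>2 u v \<le> 5"
proof (cases "\<exists>w\<in>V. d u w = 2 \<and> 2 \<le> d v w \<or> d v w = 2 \<and> 2 \<le> d u w")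
  case True
  then obtain w where "w \<in> V"
    and "d\<^sub>2 u w \<le> 1 \<and> d\<^sub>2 w v \<le> 4 \<or> d\<^sub>2 u w \<le> 4 \<and> d\<^sub>2 w v \<le> 1"
    using d2_le_1[OF uV] d2_le_1[OF vV] d2_le_4_if_2_le_d[OF vV] d2_le_4_if_2_le_d[OF uV]
      d2_commute by fastforce
  then have "d\<^sub>2 u v \<le> 1 + 4 \<or> d\<^sub>2 u v \<le> 4 + 1"
    using gdist_le_add[of "D2 V E" u w _ v] by blast
  then show ?thesis by auto
next
  case False
  then have u2: "d v w \<le> 1" if "w \<in> V" "d u w = 2" for w
    using that by auto
  have v2: "d u w \<le> 1" if "w \<in> V" "d v w = 2" for w
    using that False by auto
  have vu: "d v u = 1" using uv d_commute by metis
  have ecc: "d u w \<le> 2 \<and> d v w \<le> 2" if "w \<in> V" for w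
    using eccentricity_le_2[of u v w] eccentricity_le_2[of v u w] uV vV that uv vu u2 v2 by blast
  have dominating: "d u w \<le> 1 \<or> d v w \<le> 1" if "w \<in> V" for w
    using ecc[OF that] u2[OF that] by fastforce
  have "d\<^sub>2 u z \<le> 2 \<or> d\<^sub>2 z v \<le> 2" if zV: "z \<in> V" for z
  proof -
    consider "d u z \<in> {0, 2}" | "d v z \<in> {0, 2}" | "d u z = 1" "d v z = 1"
      using ecc[OF zV] by fastforce
    then show ?thesis
    proof cases
      case 1
      then show ?thesis using d2_le_1[OF uV zV] order_trans by fastforce
    next
      case 2
      then show ?thesis using d2_le_1[OF vV zV] d2_commute order_trans by fastforce
    next
      case 3
      then show ?thesis
        using common_neighbour_d2_le_2[OF uV vV zV dominating ecc] d2_commute by metis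
    qed
  qed
  then have "d\<^sub>2 u v \<le> 2 + 1 + 2"
    using D2_connected uV vV by (intro gconnected_gdist_le_if_balls_cover) (auto simp: D2_iff)
  then show ?thesis by simp
qed

lemma d2_le_5:
  assumes xV: "x \<in> V" and yV: "y \<in> V"
  shows "d\<^sub>2 x y \<le> 5"
proof -
  consider "d x y = 1" | "2 \<le> d x y" | "d x y = 0" by linarith
  then show ?thesis
  proof cases
    case 1
    then show ?thesis using d2_le_5_if_adjacent[OF xV yV] by blast
  next
    case 2
    then show ?thesis using d2_le_4_if_2_le_d[OF xV yV] by (auto elim: order_trans)
  next
    case 3
    then show ?thesis using d2_le_1[OF xV yV] by (auto elim: order_trans)
  qed
qed

end

theorem theorem2p8:
  fixes V :: "'a set" and E :: "'a \<Rightarrow> 'a \<Rightarrow> bool"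
  assumes "simple_graph V E"
    and "diam V E = 3"
    and "gconnected V (D2 V E)"
  shows "diam V (D2 V E) \<le> 5"
proof -
  interpret diam3_graph_D2_connected V E
    using assms by unfold_locales
  show ?thesis
    unfolding diam_def using d2_le_5 by (blast intro: Sup_least)
qed

end
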